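(* Let $b_+,b_->0$, $\delta_\pm\in\mathbb R$ with $b_\pm+\delta_\pm>0$, $c>0$, and $k\in[-\pi,\pi)$, and assume that either $k\neq 0$ or both $\delta_+\neq0$ and $\delta_-\ne0$. Let $v_1(b_+,\delta_+,k)$ be an eigenvector of $P(b_+,\delta_+,k)$ for its eigenvalue $\lambda_1$ of modulus less than $1$, and $v_2(b_-,\delta_-,k)$ an eigenvector of $P(b_-,\delta_-,k)$ for its eigenvalue $\lambda_2$ of modulus greater than $1$. Then $0$ is a two-fold eigenvalue of the type-I interface Hamiltonian $\hat H_{\mathrm I}(k)$ (its eigenspace in $\ell^2(\mathbb Z;\mathbb C^6)$ is two-dimensional) if and only if there is a nonzero constant $g\in\mathbb C$ with $$\begin{pmatrix}1&0\\0&\frac{(b_++\delta_+)(b_-+\delta_-)}{c^2}\end{pmatrix}v_1(b_+,\delta_+,k)=g\,v_2(b_-,\delta_-,k).$$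
   Context: Matrices: for $b>0$, $b+\varepsilon>0$, $k\in\mathbb R$ let $A_1=\begin{pmatrix}-b&0\\-b&-(b+\varepsilon)e^{-ik}\end{pmatrix}$, $A_2=\begin{pmatrix}-b&-(b+\varepsilon)e^{ik}\\0&-b\end{pmatrix}$, $A_3=\begin{pmatrix}-(b+\varepsilon)e^{-ik}&0\\-b&-b\end{pmatrix}$, $A_4=\begin{pmatrix}-b&-b\\0&-(b+\varepsilon)\end{pmatrix}$, $A_5=\begin{pmatrix}-b&0\\-(b+\varepsilon)e^{ik}&-b\end{pmatrix}$, $A_6=\begin{pmatrix}-(b+\varepsilon)&-b\\0&-b\end{pmatrix}$, and $P(b,\varepsilon,k)=-A_6^{-1}A_5A_4^{-1}A_3A_2^{-1}A_1$; when $k\ne0$ or $\varepsilon\neq0$ it has two distinct eigenvalues $\lambda_1,\lambda_2$ with $0<|\lambda_1|<1<|\lambda_2|$. Operator: for $n\in\mathbb Z$ let $b_n=b_+$ ($n\ge0$), $b_n=b_-$ ($n\le-1$); $c_n=b_++\delta_+$ ($n\ge0$), $c_{-1}=c$, $c_n=b_-+\delta_-$ ($n\le-2$); $d_n=b_++\delta_+$ ($n\ge0$), $d_n=b_-+\delta_-$ ($n\le-1$). $\hat H_{\mathrm I}(k)$ acts on $u=\{(u_{j,n})_{j=1}^6\}_{n\in\mathbb Z}\in\ell^2(\mathbb Z;\mathbb C^6)$ by $(\hat H_{\mathrm I}(k)u)_{1,n}=-b_nu_{4,n}-b_nu_{5,n}-c_{n-1}e^{-ik}u_{6,n-1}$,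 $(\hat H_{\mathrm I}(k)u)_{2,n}=-b_nu_{4,n}-d_ne^{ik}u_{5,n}-b_nu_{6,n}$, $(\hat H_{\mathrm I}(k)u)_{3,n}=-c_nu_{4,n+1}-b_nu_{5,n}-b_nu_{6,n}$, $(\hat H_{\mathrm I}(k)u)_{4,n}=-b_nu_{1,n}-b_nu_{2,n}-c_{n-1}u_{3,n-1}$, $(\hat H_{\mathrm I}(k)u)_{5,n}=-b_nu_{1,n}-d_ne^{-ik}u_{2,n}-b_nu_{3,n}$, $(\hat H_{\mathrm I}(k)u)_{6,n}=-c_ne^{ik}u_{1,n+1}-b_nu_{2,n}-b_nu_{3,n}$. *)

theory Defs
  imports "HOL-Analysis.Analysis"
begin

definition mat2 :: "complex \<Rightarrow> complex \<Rightarrow> complex \<Rightarrow> complex \<Rightarrow> complex^2^2" where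
  "mat2 a b c d = (\<chi> i j. if i = 1 then (if j = 1 then a else b) else (if j = 1 then c else d))"

definition A1 :: "real \<Rightarrow> real \<Rightarrow> real \<Rightarrow> complex^2^2" where
  "A1 b e k = mat2 (- of_real b) 0 (- of_real b) (- of_real (b + e) * cis (- k))"
definition A2 :: "real \<Rightarrow> real \<Rightarrow> real \<Rightarrow> complex^2^2" where
  "A2 b e k = mat2 (- of_real b) (- of_real (b + e) * cis k) 0 (- of_real b)"
definition A3 :: "real \<Rightarrow> real \<Rightarrow> real \<Rightarrow> complex^2^2" where
  "A3 b e k = mat2 (- of_real (b + e) * cis (- k)) 0 (- of_real b) (- of_real b)"
definition A4 :: "real \<Rightarrow> real \<Rightarrow> real \<Rightarrow> complex^2^2" where
  "A4 b e k = mat2 (- of_real b) (- of_real b) 0 (- of_real (b + e))"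
definition A5 :: "real \<Rightarrow> real \<Rightarrow> real \<Rightarrow> complex^2^2" where
  "A5 b e k = mat2 (- of_real b) 0 (- of_real (b + e) * cis k) (- of_real b)"
definition A6 :: "real \<Rightarrow> real \<Rightarrow> real \<Rightarrow> complex^2^2" where
  "A6 b e k = mat2 (- of_real (b + e)) (- of_real b) 0 (- of_real b)"

definition Pmat :: "real \<Rightarrow> real \<Rightarrow> real \<Rightarrow> complex^2^2" where
  "Pmat b e k = - (matrix_inv (A6 b e k) ** A5 b e k ** matrix_inv (A4 b e k) ** A3 b e k
                   ** matrix_inv (A2 b e k) ** A1 b e k)"

definition bseq :: "real \<Rightarrow> real \<Rightarrow> int \<Rightarrow> real" where
  "bseq bp bm n = (if n \<ge> 0 then bp else bm)"
definition cseq :: "real \<Rightarrow> real \<Rightarrow> real \<Rightarrow> real \<Rightarrow> real \<Rightarrow> int \<Rightarrow> real" where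
  "cseq bp dp bm dm c n = (if n \<ge> 0 then bp + dp else if n = -1 then c else bm + dm)"
definition dseq :: "real \<Rightarrow> real \<Rightarrow> real \<Rightarrow> real \<Rightarrow> int \<Rightarrow> real" where
  "dseq bp dp bm dm n = (if n \<ge> 0 then bp + dp else bm + dm)"

(* Sequences in l^2(Z; C^6): u n j is the j-th component (j = 1..6) at site n;
   components outside 1..6 are required to vanish. *)
definition l2Z6 :: "(int \<Rightarrow> nat \<Rightarrow> complex) set" where
  "l2Z6 = {u. (\<forall>n j. j \<notin> {1..6} \<longrightarrow> u n j = 0) \<and>
              (\<forall>j. (\<lambda>n. (cmod (u n j))\<^sup>2) summable_on (UNIV :: int set))}"

definition HI :: "real \<Rightarrow> real \<Rightarrow> real \<Rightarrow> real \<Rightarrow> real \<Rightarrow> real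
                 \<Rightarrow> (int \<Rightarrow> nat \<Rightarrow> complex) \<Rightarrow> (int \<Rightarrow> nat \<Rightarrow> complex)" where
  "HI bp dp bm dm c k u = (\<lambda>n j.
     let b = (\<lambda>m. complex_of_real (bseq bp bm m));
         cc = (\<lambda>m. complex_of_real (cseq bp dp bm dm c m));
         d = (\<lambda>m. complex_of_real (dseq bp dp bm dm m)) in
     if j = 1 then - b n * u n 4 - b n * u n 5 - cc (n - 1) * cis (- k) * u (n - 1) 6
     else if j = 2 then - b n * u n 4 - d n * cis k * u n 5 - b n * u n 6
     else if j = 3 then - cc n * u (n + 1) 4 - b n * u n 5 - b n * u n 6
     else if j = 4 then - b n * u n 1 - b n * u n 2 - cc (n - 1) * u (n - 1) 3
     else if j = 5 then - b n * u n 1 - d n * cis (- k) * u n 2 - b n * u n 3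
     else if j = 6 then - cc n * cis k * u (n + 1) 1 - b n * u n 2 - b n * u n 3
     else 0)"

definition kerHI :: "real \<Rightarrow> real \<Rightarrow> real \<Rightarrow> real \<Rightarrow> real \<Rightarrow> real \<Rightarrow> (int \<Rightarrow> nat \<Rightarrow> complex) set" where
  "kerHI bp dp bm dm c k = {u \<in> l2Z6. HI bp dp bm dm c k u = (\<lambda>n j. 0)}"

definition cdim_two :: "(int \<Rightarrow> nat \<Rightarrow> complex) set \<Rightarrow> bool" where
  "cdim_two S \<longleftrightarrow> (\<exists>v w. v \<in> S \<and> w \<in> S \<and>
      (\<forall>a b::complex. (\<lambda>n j. a * v n j + b * w n j) = (\<lambda>n j. 0) \<longrightarrow> a = 0 \<and> b = 0) \<and>
      (\<forall>u\<in>S. \<exists>a b::complex. u = (\<lambda>n j. a * v n j + b * w n j)))"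

end

theory Submission
  imports Defs
begin

(* The operator couples the components 1-3 only with the components 4-6, and a conjugation
   combined with the phase e^(-ikn), which exchanges the two triples, commutes with it. So the
   kernel is spanned by the zero modes u supported on the components 4-6 together with their
   conjugates, and it is two-dimensional exactly when such a u exists; it is then unique up to
   a factor.
   Away from the interface, the equations for u are a recursion which the transfer matrix P
   advances by two sites. Since |det P| = 1, the only orbits of P decaying in the forward
   (backward) direction start on the eigenline of the eigenvalue inside (outside) the unit circle.
   Hence u is square-summable iff its interface values (u_{0,4}, u_{-1,6}), rescaled by the
   interface hopping c, lie on the line of v1 for the right medium and on that of v2 for the left
   one; conversely such values glue two Bloch solutions into a zero mode. Compatibility of the two
   lines is the stated matching condition. *)

lemma vec2_eq_iff: "(x :: 'a^2) = y \<longleftrightarrow> x$1 = y$1 \<and> x$2 = y$2"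
  by (simp add: vec_eq_iff forall_2)

lemma mat2_mult_vector: "mat2 a b c d *v x = vector [a * x$1 + b * x$2, c * x$1 + d * x$2]"
  by (simp add: vec2_eq_iff mat2_def matrix_vector_mult_def sum_2)

lemma det_mat2: "det (mat2 a b c d) = a * d - b * c"
  by (simp add: det_2 mat2_def)

lemma invertible_mat2: "a * d - b * c \<noteq> 0 \<Longrightarrow> invertible (mat2 a b c d)"
  by (simp add: invertible_det_nz det_mat2)

lemma matrix_inv_mult_left:
  fixes A :: "'a::semiring_1^'n^'n"
  assumes "invertible A"
  shows "matrix_inv A ** A = mat 1"
  using someI_ex[OF assms[unfolded invertible_def]] by (simp add: matrix_inv_def)

lemma matrix_inv_mult_right:
  fixes A :: "'a::semiring_1^'n^'n"
  assumes "invertible A"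
  shows "A ** matrix_inv A = mat 1"
  using someI_ex[OF assms[unfolded invertible_def]] by (simp add: matrix_inv_def)

lemma det_matrix_inv:
  fixes A :: "'a::field^'n^'n"
  assumes "invertible A"
  shows "det (matrix_inv A) = inverse (det A)"
  using det_mul[of "matrix_inv A" A] matrix_inv_mult_left[OF assms] assms
  by (simp add: invertible_det_nz field_simps)

lemma matrix_vector_mult_uminus_left: "(- A) *v x = - (A *v (x :: 'a::ring_1^'n))"
  by (simp add: vec_eq_iff matrix_vector_mult_def sum_negf)

lemma matrix_vector_mult_uminus_right: "A *v (- x) = - (A *v (x :: 'a::ring_1^'n))"
  by (simp add: vec_eq_iff matrix_vector_mult_def sum_negf)

lemma matrix_mul_uminus_left: "(- A) ** B = - (A ** (B :: 'a::ring_1^'n^'n))"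
  by (simp add: vec_eq_iff matrix_matrix_mult_def sum_negf)

lemma matrix_mul_uminus_right: "A ** (- B) = - (A ** (B :: 'a::ring_1^'n^'n))"
  by (simp add: vec_eq_iff matrix_matrix_mult_def sum_negf)

lemma matrix_vector_add_eq_0_iff:
  fixes A B :: "'a::field^'n^'n"
  assumes "invertible B"
  shows "A *v x + B *v y = 0 \<longleftrightarrow> y = - (matrix_inv B ** A) *v x"
proof
  assume "A *v x + B *v y = 0"
  then have "B *v y = - (A *v x)"
    by (simp add: eq_neg_iff_add_eq_0 add.commute)
  then have "matrix_inv B *v (B *v y) = matrix_inv B *v (- (A *v x))"
    by simp
  then show "y = - (matrix_inv B ** A) *v x"
    by (simp add: matrix_vector_mul_assoc matrix_inv_mult_left[OF assms]
        matrix_vector_mult_uminus_left matrix_vector_mult_uminus_right)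
next
  assume "y = - (matrix_inv B ** A) *v x"
  then show "A *v x + B *v y = 0"
    by (simp add: matrix_vector_mul_assoc matrix_mul_assoc matrix_inv_mult_right[OF assms]
        matrix_vector_mult_uminus_left matrix_vector_mult_uminus_right)
qed

lemma mat_mult_vector_2: "mat c *v x = c *s (x :: 'a::semiring_1^2)"
  by (simp add: vec2_eq_iff matrix_vector_mult_def mat_def sum_2)

section \<open>Eigenlines and decaying orbits\<close>

lemma eigenvalue_2x2_quadratic:
  fixes P :: "'a::field^2^2"
  assumes "P *v v = l *s v" "v \<noteq> 0"
  shows "l * (P$1$1 + P$2$2 - l) = det P"
proof -
  have eq: "(P$1$1 - l) * v$1 + P$1$2 * v$2 = 0" "P$2$1 * v$1 + (P$2$2 - l) * v$2 = 0"
    using assms(1) by (simp_all add: vec2_eq_iff matrix_vector_mult_def sum_2 algebra_simps)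
  have "(det P - l * (P$1$1 + P$2$2 - l)) * v$i = 0" for i
  proof -
    have "(det P - l * (P$1$1 + P$2$2 - l)) * v$1
        = (P$2$2 - l) * ((P$1$1 - l) * v$1 + P$1$2 * v$2) - P$1$2 * (P$2$1 * v$1 + (P$2$2 - l) * v$2)"
      "(det P - l * (P$1$1 + P$2$2 - l)) * v$2
        = (P$1$1 - l) * (P$2$1 * v$1 + (P$2$2 - l) * v$2) - P$2$1 * ((P$1$1 - l) * v$1 + P$1$2 * v$2)"
      by (simp_all add: det_2 algebra_simps)
    then show ?thesis
      using eq exhaust_2[of i] by auto
  qed
  moreover obtain i where "v$i \<noteq> 0"
    using assms(2) by (auto simp: vec_eq_iff)
  ultimately show ?thesis
    by (metis mult_eq_0_iff right_minus_eq)
qed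

lemma kernel_of_nonzero_2x2:
  fixes N :: "'a::field^2^2"
  assumes "N \<noteq> 0" "N *v v = 0" "N *v x = 0" "v \<noteq> 0"
  shows "\<exists>a. x = a *s v"
proof -
  have row: "N$i$1 * y$1 + N$i$2 * y$2 = 0" if "N *v y = 0" for i y
    using that by (simp add: vec_eq_iff matrix_vector_mult_def sum_2)
  have "N$i$j * (v$1 * x$2 - v$2 * x$1) = 0" for i j
  proof -
    have "N$i$1 * (v$1 * x$2 - v$2 * x$1) = x$2 * (N$i$1 * v$1 + N$i$2 * v$2) - v$2 * (N$i$1 * x$1 + N$i$2 * x$2)"
      "N$i$2 * (v$1 * x$2 - v$2 * x$1) = v$1 * (N$i$1 * x$1 + N$i$2 * x$2) - x$1 * (N$i$1 * v$1 + N$i$2 * v$2)"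
      by (simp_all add: algebra_simps)
    then show ?thesis
      using row[OF assms(2), of i] row[OF assms(3), of i] exhaust_2[of j] by auto
  qed
  moreover obtain i j where "N$i$j \<noteq> 0"
    using assms(1) by (auto simp: vec_eq_iff)
  ultimately have cross: "v$1 * x$2 = v$2 * x$1"
    by auto
  show ?thesis
  proof (cases "v$1 = 0")
    case True
    then have "v$2 \<noteq> 0"
      using assms(4) by (auto simp: vec2_eq_iff)
    then show ?thesis
      using True cross by (intro exI[of _ "x$2 / v$2"]) (auto simp: vec2_eq_iff)
  next
    case False
    then show ?thesis
      using cross by (intro exI[of _ "x$1 / v$1"]) (auto simp: vec2_eq_iff field_simps)
  qed
qed

lemma eigenspace_2x2_unique:
  fixes P :: "'a::field^2^2"
  assumes "P *v v = l *s v" "v \<noteq> 0" "P *v x = l *s x" "det P \<noteq> l * l"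
  shows "\<exists>a. x = a *s v"
proof (rule kernel_of_nonzero_2x2)
  show "P - mat l \<noteq> 0"
  proof
    assume "P - mat l = 0"
    then have "P = mat l"
      by simp
    then show False
      using assms(4) by (simp add: det_2 mat_def)
  qed
qed (use assms in \<open>simp_all add: matrix_vector_mult_diff_rdistrib mat_mult_vector_2\<close>)


lemma eigen_residual_2x2:
  fixes P :: "'a::comm_ring_1^2^2"
  assumes "l * (P$1$1 + P$2$2 - l) = det P"
  shows "P *v (P *v x - l *s x) = (P$1$1 + P$2$2 - l) *s (P *v x - l *s x)"
proof -
  have "(P *v (P *v x - l *s x) - (P$1$1 + P$2$2 - l) *s (P *v x - l *s x))$i
      = x$i * (l * (P$1$1 + P$2$2 - l) - det P)" for i
    using exhaust_2[of i]
    by (auto simp: matrix_vector_mult_def sum_2 det_2 algebra_simps)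
  then show ?thesis
    using assms by (simp add: vec_eq_iff)
qed

text \<open>For \<open>|det P| = 1\<close> and an eigenvalue \<open>l\<close> off the unit circle, the residual \<open>P x - l x\<close> lies
  in the eigenspace of the other eigenvalue \<open>\<mu> = det P / l\<close>, with \<open>|\<mu>| = 1 / |l|\<close>. An orbit
  tending to zero in the direction in which \<open>\<mu>\<close> expands therefore has zero residual, and the
  residual vanishes only on the eigenline of \<open>l\<close>.\<close>

lemma residual_eigenvalue_2x2:
  fixes P :: "complex^2^2"
  assumes "cmod (det P) = 1" "P *v v = l *s v" "v \<noteq> 0"
  obtains \<mu> where "cmod l * cmod \<mu> = 1" "\<And>x. P *v (P *v x - l *s x) = \<mu> *s (P *v x - l *s x)"
proof
  have "l * (P$1$1 + P$2$2 - l) = det P"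
    by (rule eigenvalue_2x2_quadratic[OF assms(2,3)])
  then show "cmod l * cmod (P$1$1 + P$2$2 - l) = 1"
    "P *v (P *v x - l *s x) = (P$1$1 + P$2$2 - l) *s (P *v x - l *s x)" for x
    using assms(1) eigen_residual_2x2 by (metis norm_mult)+
qed

lemma eigenline_if_unimodular:
  fixes P :: "complex^2^2"
  assumes "cmod (det P) = 1" "P *v v = l *s v" "v \<noteq> 0" "cmod l \<noteq> 1" "P *v x = l *s x"
  shows "\<exists>a. x = a *s v"
proof (rule eigenspace_2x2_unique[OF assms(2,3,5)])
  show "det P \<noteq> l * l"
  proof
    assume "det P = l * l"
    then have "cmod l ^ 2 = 1"
      using assms(1) by (simp add: power2_eq_square norm_mult)
    then show False
      using assms(4) norm_ge_zero[of l] by (auto simp: power2_eq_1_iff)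
  qed
qed

lemma eq_0_if_norm_le_LIMSEQ_0:
  fixes z :: "'a::real_normed_vector"
  assumes "f \<longlonglongrightarrow> 0" "\<And>m. norm z \<le> norm (f m)"
  shows "z = 0"
proof -
  have "(\<lambda>m. norm (f m)) \<longlonglongrightarrow> 0"
    using assms(1) by (simp add: tendsto_norm_zero)
  then have "norm z \<le> 0"
    by (rule LIMSEQ_le_const) (use assms(2) in auto)
  then show ?thesis
    by simp
qed

lemma eigenline_if_residual_norm_le:
  fixes P :: "complex^2^2"
  assumes "cmod (det P) = 1" "P *v v = l *s v" "v \<noteq> 0" "cmod l \<noteq> 1" "s \<longlonglongrightarrow> 0"
    and "\<And>m i. norm ((P *v s 0 - l *s s 0) $ i) \<le> norm ((P *v s m - l *s s m) $ i)"
  shows "\<exists>a. s 0 = a *s v"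
proof (rule eigenline_if_unimodular[OF assms(1-4)])
  have "(\<lambda>m. (P - mat l) *v s m) \<longlonglongrightarrow> (P - mat l) *v 0"
    by (intro bounded_linear.tendsto[OF matrix_vector_mul_bounded_linear] assms(5))
  then have "(\<lambda>m. (P *v s m - l *s s m) $ i) \<longlonglongrightarrow> 0" for i
    by (auto simp: matrix_vector_mult_diff_rdistrib mat_mult_vector_2 dest: tendsto_vec_nth[of _ _ _ i])
  then have "(P *v s 0 - l *s s 0) $ i = 0" for i
    using assms(6) by (rule eq_0_if_norm_le_LIMSEQ_0)
  then show "P *v s 0 = l *s s 0"
    by (simp add: vec_eq_iff)
qed

lemma forward_orbit_LIMSEQ_0_eigenline:
  fixes P :: "complex^2^2"
  assumes "cmod (det P) = 1" "P *v v = l *s v" "v \<noteq> 0" "cmod l < 1"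
    and orbit: "\<And>m. s (Suc m) = P *v s m" and "s \<longlonglongrightarrow> 0"
  shows "\<exists>a. s 0 = a *s v"
proof -
  obtain \<mu> where "cmod l * cmod \<mu> = 1" and residual: "\<And>x. P *v (P *v x - l *s x) = \<mu> *s (P *v x - l *s x)"
    using residual_eigenvalue_2x2[OF assms(1-3)] by blast
  then have "cmod \<mu> \<ge> 1"
    using assms(4) mult_left_le_one_le[of "cmod l" "cmod \<mu>"] by (smt (verit) norm_ge_zero mult.commute)
  define t where "t m = P *v s m - l *s s m" for m
  have "t (Suc m) = \<mu> *s t m" for m
    unfolding t_def residual[symmetric]
    by (simp add: orbit matrix_vector_mult_diff_distrib vector_scalar_commute)
  then have power: "t m = \<mu> ^ m *s t 0" for m
    by (induction m) simp_all
  have "norm (t 0 $ i) \<le> norm (t m $ i)" for m i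
    using \<open>cmod \<mu> \<ge> 1\<close> unfolding power[of m]
    by (simp add: norm_mult norm_power mult_le_cancel_right1 one_le_power)
  then show ?thesis
    using eigenline_if_residual_norm_le[OF assms(1-3) _ assms(6)] assms(4) by (simp add: t_def)
qed

lemma backward_orbit_LIMSEQ_0_eigenline:
  fixes P :: "complex^2^2"
  assumes "cmod (det P) = 1" "P *v v = l *s v" "v \<noteq> 0" "cmod l > 1"
    and orbit: "\<And>m. s m = P *v s (Suc m)" and "s \<longlonglongrightarrow> 0"
  shows "\<exists>a. s 0 = a *s v"
proof -
  obtain \<mu> where "cmod l * cmod \<mu> = 1" and residual: "\<And>x. P *v (P *v x - l *s x) = \<mu> *s (P *v x - l *s x)"
    using residual_eigenvalue_2x2[OF assms(1-3)] by blast
  then have "cmod \<mu> \<le> 1"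
    using assms(4) mult_left_mono[of 1 "cmod \<mu>" "cmod l"] by (smt (verit) norm_ge_zero)
  define t where "t m = P *v s m - l *s s m" for m
  have t_Suc: "t m = \<mu> *s t (Suc m)" for m
    unfolding t_def residual[symmetric]
    by (simp add: orbit[of m] matrix_vector_mult_diff_distrib vector_scalar_commute)
  have power: "t 0 = \<mu> ^ m *s t m" for m
  proof (induction m)
    case (Suc m)
    then show ?case
      by (subst (asm) t_Suc[of m]) (simp add: vector_smult_assoc power_Suc2)
  qed simp
  have "norm (t 0 $ i) \<le> norm (t m $ i)" for m i
    using \<open>cmod \<mu> \<le> 1\<close> unfolding power[of m]
    by (simp add: norm_mult norm_power mult_left_le_one_le power_le_one)
  then show ?thesis
    using eigenline_if_residual_norm_le[OF assms(1-3) _ assms(6)] assms(4) by (simp add: t_def)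
qed

section \<open>Transfer matrices of a homogeneous medium\<close>

definition T1 :: "real \<Rightarrow> real \<Rightarrow> real \<Rightarrow> complex^2^2" where
  "T1 b e k = - (matrix_inv (A2 b e k) ** A1 b e k)"

definition T2 :: "real \<Rightarrow> real \<Rightarrow> real \<Rightarrow> complex^2^2" where
  "T2 b e k = - (matrix_inv (A4 b e k) ** A3 b e k)"

definition T3 :: "real \<Rightarrow> real \<Rightarrow> real \<Rightarrow> complex^2^2" where
  "T3 b e k = - (matrix_inv (A6 b e k) ** A5 b e k)"

lemma Pmat_eq_transfers: "Pmat b e k = T3 b e k ** T2 b e k ** T1 b e k"
  by (simp add: Pmat_def T1_def T2_def T3_def matrix_mul_uminus_left matrix_mul_uminus_right
      matrix_mul_assoc)

lemma
  assumes "b > 0" "b + e > 0"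
  shows invertible_A2: "invertible (A2 b e k)"
    and invertible_A4: "invertible (A4 b e k)"
    and invertible_A6: "invertible (A6 b e k)"
  using assms by (auto simp: A2_def A4_def A6_def intro!: invertible_mat2 simp del: of_real_add)

lemma norm_det_Pmat:
  assumes "b > 0" "b + e > 0"
  shows "cmod (det (Pmat b e k)) = 1"
proof -
  have det_neg: "det (- A) = det (A :: complex^2^2)" for A
    by (simp add: det_2)
  have "det (Pmat b e k) = det (A5 b e k) * det (A3 b e k) * det (A1 b e k)
      / (det (A6 b e k) * det (A4 b e k) * det (A2 b e k))"
    using assms by (simp add: Pmat_def det_neg det_mul det_matrix_inv invertible_A2 invertible_A4
        invertible_A6 field_simps)
  also have "\<dots> = cis (- k) * cis (- k)"
    using assms by (simp add: A1_def A2_def A3_def A4_def A5_def A6_def det_mat2 field_simps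
        del: of_real_add)
  finally show ?thesis
    by (simp add: norm_mult)
qed

text \<open>Rows 1 to 3 of \<open>HI u = 0\<close> at the site \<open>n\<close>, with the signs dropped, for constant
  coefficients \<open>b\<^sub>n = b\<close> and \<open>c\<^sub>n = d\<^sub>n = b + e\<close>. On the sites \<open>n, n + 1\<close> they are the
  block equations of the matrices \<open>A\<^sub>i\<close>, so \<open>P\<close> maps \<open>(w n 4, w (n - 1) 6)\<close> to the same
  pair two sites further on.\<close>

definition bulk_eqs :: "real \<Rightarrow> real \<Rightarrow> real \<Rightarrow> (int \<Rightarrow> nat \<Rightarrow> complex) \<Rightarrow> int \<Rightarrow> bool" where
  "bulk_eqs b e k w n \<longleftrightarrow>
     of_real b * w n 4 + of_real b * w n 5 + of_real (b + e) * cis (- k) * w (n - 1) 6 = 0 \<and>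
     of_real b * w n 4 + of_real (b + e) * cis k * w n 5 + of_real b * w n 6 = 0 \<and>
     of_real (b + e) * w (n + 1) 4 + of_real b * w n 5 + of_real b * w n 6 = 0"

lemma bulk_eqs_pair_iff:
  "bulk_eqs b e k w n \<and> bulk_eqs b e k w (n + 1) \<longleftrightarrow>
     A1 b e k *v vector [w n 4, w (n - 1) 6] + A2 b e k *v vector [w n 6, w n 5] = 0 \<and>
     A3 b e k *v vector [w n 6, w n 5] + A4 b e k *v vector [w (n + 1) 5, w (n + 1) 4] = 0 \<and>
     A5 b e k *v vector [w (n + 1) 5, w (n + 1) 4] + A6 b e k *v vector [w (n + 2) 4, w (n + 1) 6] = 0"
  (is "_ \<longleftrightarrow> ?a = 0 \<and> ?b = 0 \<and> ?c = 0")
proof -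
  define r1 r2 r3 where
    "r1 n = of_real b * w n 4 + of_real b * w n 5 + of_real (b + e) * cis (- k) * w (n - 1) 6"
    "r2 n = of_real b * w n 4 + of_real (b + e) * cis k * w n 5 + of_real b * w n 6"
    "r3 n = of_real (b + e) * w (n + 1) 4 + of_real b * w n 5 + of_real b * w n 6" for n
  have "?a = - vector [r2 n, r1 n]" "?b = - vector [r1 (n + 1), r3 n]"
    "?c = - vector [r3 (n + 1), r2 (n + 1)]"
    by (simp_all add: r1_r2_r3_def A1_def A2_def A3_def A4_def A5_def A6_def mat2_mult_vector
        vec2_eq_iff algebra_simps del: of_real_add)
  moreover have "bulk_eqs b e k w m \<longleftrightarrow> r1 m = 0 \<and> r2 m = 0 \<and> r3 m = 0" for m
    by (simp add: bulk_eqs_def r1_r2_r3_def)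
  moreover have "- vector [x, y] = (0 :: complex^2) \<longleftrightarrow> x = 0 \<and> y = 0" for x y
    by (simp add: vec2_eq_iff)
  ultimately show ?thesis
    by auto
qed

lemma bulk_eqs_pair_iff_transfer:
  assumes "b > 0" "b + e > 0"
  shows "bulk_eqs b e k w n \<and> bulk_eqs b e k w (n + 1) \<longleftrightarrow>
     vector [w n 6, w n 5] = T1 b e k *v vector [w n 4, w (n - 1) 6] \<and>
     vector [w (n + 1) 5, w (n + 1) 4] = T2 b e k *v vector [w n 6, w n 5] \<and>
     vector [w (n + 2) 4, w (n + 1) 6] = T3 b e k *v vector [w (n + 1) 5, w (n + 1) 4]"
  unfolding bulk_eqs_pair_iff T1_def T2_def T3_def
  by (simp add: matrix_vector_add_eq_0_iff invertible_A2 invertible_A4 invertible_A6 assms)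

lemma bulk_eqs_transfer_step:
  assumes "b > 0" "b + e > 0" "bulk_eqs b e k w n" "bulk_eqs b e k w (n + 1)"
  shows "Pmat b e k *v vector [w n 4, w (n - 1) 6] = vector [w (n + 2) 4, w (n + 1) 6]"
proof -
  have "vector [w n 6, w n 5] = T1 b e k *v vector [w n 4, w (n - 1) 6]"
    "vector [w (n + 1) 5, w (n + 1) 4] = T2 b e k *v vector [w n 6, w n 5]"
    "vector [w (n + 2) 4, w (n + 1) 6] = T3 b e k *v vector [w (n + 1) 5, w (n + 1) 4]"
    using bulk_eqs_pair_iff_transfer[OF assms(1,2)] assms(3,4) by blast+
  then show ?thesis
    by (simp add: Pmat_eq_transfers matrix_vector_mul_assoc[symmetric])
qed

lemma LIMSEQ_vector_2:
  assumes "(\<lambda>m. s m $ 1) \<longlonglongrightarrow> 0" "(\<lambda>m. s m $ 2) \<longlonglongrightarrow> 0"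
  shows "(s :: nat \<Rightarrow> 'a::real_normed_vector^2) \<longlonglongrightarrow> 0"
proof (rule vec_tendstoI)
  fix i :: 2
  show "(\<lambda>m. s m $ i) \<longlonglongrightarrow> 0 $ i"
    using assms exhaust_2[of i] by auto
qed

lemma right_decaying_bulk_solution_eigenline:
  assumes "b > 0" "b + e > 0" and eqs: "\<And>n. n \<ge> 0 \<Longrightarrow> bulk_eqs b e k w n"
    and "(\<lambda>m. w (2 * int m) 4) \<longlonglongrightarrow> 0" "(\<lambda>m. w (2 * int m + 1) 6) \<longlonglongrightarrow> 0"
    and "Pmat b e k *v v = l *s v" "v \<noteq> 0" "cmod l < 1"
  shows "\<exists>a. vector [w 0 4, w (-1) 6] = a *s v"
proof -
  define s :: "nat \<Rightarrow> complex^2" where "s m = vector [w (2 * int m) 4, w (2 * int m - 1) 6]" for m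
  have "s (Suc m) = Pmat b e k *v s m" for m
  proof -
    have "2 * int m + 2 = 2 * int (Suc m)" "2 * int m + 1 = 2 * int (Suc m) - 1"
      by simp_all
    then show ?thesis
      using bulk_eqs_transfer_step[OF assms(1,2) eqs eqs, of "2 * int m"] by (simp only: s_def)
  qed
  moreover have "s \<longlonglongrightarrow> 0"
  proof (rule LIMSEQ_vector_2)
    show "(\<lambda>m. s m $ 1) \<longlonglongrightarrow> 0"
      using assms(4) by (simp add: s_def)
    show "(\<lambda>m. s m $ 2) \<longlonglongrightarrow> 0"
    proof (rule LIMSEQ_imp_Suc)
      have "(\<lambda>m. s (Suc m) $ 2) = (\<lambda>m. w (2 * int m + 1) 6)"
        by (simp add: s_def algebra_simps)
      then show "(\<lambda>m. s (Suc m) $ 2) \<longlonglongrightarrow> 0"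
        using assms(5) by simp
    qed
  qed
  ultimately have "\<exists>a. s 0 = a *s v"
    by (rule forward_orbit_LIMSEQ_0_eigenline[OF norm_det_Pmat[OF assms(1,2)] assms(6-8)])
  then show ?thesis
    by (simp add: s_def)
qed

lemma left_decaying_bulk_solution_eigenline:
  assumes "b > 0" "b + e > 0" and eqs: "\<And>n. n \<le> -1 \<Longrightarrow> bulk_eqs b e k w n"
    and "(\<lambda>m. w (- 2 * int m - 2) 4) \<longlonglongrightarrow> 0" "(\<lambda>m. w (- 2 * int m - 1) 6) \<longlonglongrightarrow> 0"
    and "Pmat b e k *v v = l *s v" "v \<noteq> 0" "cmod l > 1"
  shows "\<exists>a. vector [w 0 4, w (-1) 6] = a *s v"
proof -
  define s :: "nat \<Rightarrow> complex^2" where "s m = vector [w (- 2 * int m) 4, w (- 2 * int m - 1) 6]" for m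
  have "s m = Pmat b e k *v s (Suc m)" for m
  proof -
    have "- 2 * int (Suc m) = - 2 * int m - 2" "- 2 * int m - 2 + 2 = - 2 * int m"
      "- 2 * int m - 2 + 1 = - 2 * int m - 1" "- 2 * int m - 2 - 1 = - 2 * int (Suc m) - 1"
      by simp_all
    then show ?thesis
      using bulk_eqs_transfer_step[OF assms(1,2) eqs eqs, of "- 2 * int m - 2"]
      by (simp only: s_def)
  qed
  moreover have "s \<longlonglongrightarrow> 0"
  proof (rule LIMSEQ_vector_2)
    show "(\<lambda>m. s m $ 1) \<longlonglongrightarrow> 0"
    proof (rule LIMSEQ_imp_Suc)
      have "- 2 * int (Suc m) = - 2 * int m - 2" for m
        by simp
      then show "(\<lambda>m. s (Suc m) $ 1) \<longlonglongrightarrow> 0"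
        using assms(4) by (simp only: s_def vector_2)
    qed
    show "(\<lambda>m. s m $ 2) \<longlonglongrightarrow> 0"
      using assms(5) by (simp add: s_def)
  qed
  ultimately have "\<exists>a. s 0 = a *s v"
    by (rule backward_orbit_LIMSEQ_0_eigenline[OF norm_det_Pmat[OF assms(1,2)] assms(6-8)])
  then show ?thesis
    by (simp add: s_def)
qed

section \<open>The interface Hamiltonian\<close>

lemma HI_rows:
  "HI bp dp bm dm c k u n 1 = - (of_real (bseq bp bm n) * u n 4 + of_real (bseq bp bm n) * u n 5
     + of_real (cseq bp dp bm dm c (n - 1)) * cis (- k) * u (n - 1) 6)"
  "HI bp dp bm dm c k u n 2 = - (of_real (bseq bp bm n) * u n 4
     + of_real (dseq bp dp bm dm n) * cis k * u n 5 + of_real (bseq bp bm n) * u n 6)"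
  "HI bp dp bm dm c k u n 3 = - (of_real (cseq bp dp bm dm c n) * u (n + 1) 4
     + of_real (bseq bp bm n) * u n 5 + of_real (bseq bp bm n) * u n 6)"
  "HI bp dp bm dm c k u n 4 = - (of_real (bseq bp bm n) * u n 1 + of_real (bseq bp bm n) * u n 2
     + of_real (cseq bp dp bm dm c (n - 1)) * u (n - 1) 3)"
  "HI bp dp bm dm c k u n 5 = - (of_real (bseq bp bm n) * u n 1
     + of_real (dseq bp dp bm dm n) * cis (- k) * u n 2 + of_real (bseq bp bm n) * u n 3)"
  "HI bp dp bm dm c k u n 6 = - (of_real (cseq bp dp bm dm c n) * cis k * u (n + 1) 1
     + of_real (bseq bp bm n) * u n 2 + of_real (bseq bp bm n) * u n 3)"
  "j \<notin> {1..6} \<Longrightarrow> HI bp dp bm dm c k u n j = 0"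
  by (auto simp: HI_def Let_def algebra_simps)

lemma HI_upper_rows_eq_0_iff:
  "(\<forall>j\<in>{1,2,3}. HI bp dp bm dm c k u n j = 0) \<longleftrightarrow>
     of_real (bseq bp bm n) * u n 4 + of_real (bseq bp bm n) * u n 5
       + of_real (cseq bp dp bm dm c (n - 1)) * cis (- k) * u (n - 1) 6 = 0 \<and>
     of_real (bseq bp bm n) * u n 4 + of_real (dseq bp dp bm dm n) * cis k * u n 5
       + of_real (bseq bp bm n) * u n 6 = 0 \<and>
     of_real (cseq bp dp bm dm c n) * u (n + 1) 4 + of_real (bseq bp bm n) * u n 5
       + of_real (bseq bp bm n) * u n 6 = 0"
  by (simp only: HI_rows(1-3) ball_simps neg_equal_0_iff_equal simp_thms)

definition rescale :: "int \<Rightarrow> nat \<Rightarrow> real \<Rightarrow> (int \<Rightarrow> nat \<Rightarrow> complex) \<Rightarrow> int \<Rightarrow> nat \<Rightarrow> complex" where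
  "rescale n0 j0 r u = (\<lambda>n j. if n = n0 \<and> j = j0 then of_real r * u n j else u n j)"

locale interface =
  fixes bp bm dp dm c k :: real
  assumes bp_pos: "bp > 0" and bm_pos: "bm > 0" and bdp_pos: "bp + dp > 0"
    and bdm_pos: "bm + dm > 0" and c_pos: "c > 0"
begin

abbreviation H :: "(int \<Rightarrow> nat \<Rightarrow> complex) \<Rightarrow> int \<Rightarrow> nat \<Rightarrow> complex" where
  "H \<equiv> HI bp dp bm dm c k"

text \<open>\<open>HI\<close> maps the components 4 to 6 to the components 1 to 3 and vice versa. A \<open>B_mode\<close> is
  annihilated by the first of these two blocks.\<close>

definition B_mode :: "(int \<Rightarrow> nat \<Rightarrow> complex) \<Rightarrow> bool" where
  "B_mode u \<longleftrightarrow> (\<forall>n. \<forall>j\<in>{1,2,3}. H u n j = 0)"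

lemma upper_rows_iff_bulk_eqs_right:
  assumes "n \<ge> 0"
  shows "(\<forall>j\<in>{1,2,3}. H u n j = 0) \<longleftrightarrow> bulk_eqs bp dp k (rescale (-1) 6 (c / (bp + dp)) u) n"
proof -
  define \<rho> where "\<rho> = c / (bp + dp)"
  have "(bp + dp) * \<rho> = c"
    using bdp_pos by (simp add: \<rho>_def)
  then have \<rho>: "of_real (bp + dp) * cis (- k) * (of_real \<rho> * z) = of_real c * cis (- k) * z" for z
    by (simp add: ac_simps flip: of_real_mult del: of_real_add)
  show ?thesis
    using assms unfolding \<rho>_def[symmetric] HI_upper_rows_eq_0_iff
    by (cases "n = 0") (simp_all add: bulk_eqs_def rescale_def bseq_def cseq_def dseq_def
        \<rho> del: of_real_add)
qed

lemma upper_rows_iff_bulk_eqs_left: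
  assumes "n \<le> -1"
  shows "(\<forall>j\<in>{1,2,3}. H u n j = 0) \<longleftrightarrow> bulk_eqs bm dm k (rescale 0 4 (c / (bm + dm)) u) n"
proof -
  define \<rho> where "\<rho> = c / (bm + dm)"
  have "(bm + dm) * \<rho> = c"
    using bdm_pos by (simp add: \<rho>_def)
  then have \<rho>: "of_real (bm + dm) * (of_real \<rho> * z) = of_real c * (z :: complex)" for z
    by (simp add: ac_simps flip: of_real_mult del: of_real_add)
  show ?thesis
    using assms unfolding \<rho>_def[symmetric] HI_upper_rows_eq_0_iff
    by (cases "n = -1") (simp_all add: bulk_eqs_def rescale_def bseq_def cseq_def dseq_def
        \<rho> del: of_real_add)
qed

text \<open>The interface hopping \<open>c\<close> only multiplies \<open>u 0 4\<close> and \<open>u (-1) 6\<close>; rescaling one of these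
  values turns the equations on each half-line into bulk equations.\<close>

lemma B_mode_iff_bulk_eqs:
  "B_mode u \<longleftrightarrow> (\<forall>n\<ge>0. bulk_eqs bp dp k (rescale (-1) 6 (c / (bp + dp)) u) n) \<and>
                 (\<forall>n\<le>-1. bulk_eqs bm dm k (rescale 0 4 (c / (bm + dm)) u) n)"
  unfolding B_mode_def
  by (metis linorder_not_le upper_rows_iff_bulk_eqs_left upper_rows_iff_bulk_eqs_right zle_diff1_eq
      diff_0)

end

lemma l2Z6_LIMSEQ_0:
  assumes "u \<in> l2Z6" "inj g"
  shows "(\<lambda>m. u (g m) j) \<longlonglongrightarrow> 0"
proof -
  define f where "f = (\<lambda>n. (cmod (u n j))\<^sup>2)"
  have "f summable_on UNIV"
    using assms(1) by (simp add: l2Z6_def f_def)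
  then have "f summable_on range g"
    by (rule summable_on_subset_banach) simp
  then have "(f \<circ> g) summable_on UNIV"
    using summable_on_reindex[of g UNIV f] assms(2) by simp
  then have "summable (f \<circ> g)"
    by (simp add: summable_on_UNIV_nonneg_real_iff f_def)
  then have "(\<lambda>m. sqrt (f (g m))) \<longlonglongrightarrow> sqrt 0"
    by (intro tendsto_real_sqrt) (simp add: summable_LIMSEQ_zero o_def)
  then show ?thesis
    by (simp add: f_def tendsto_norm_zero_iff)
qed

lemma summable_on_int_if_summable_halves:
  fixes f :: "int \<Rightarrow> real"
  assumes "\<And>n. f n \<ge> 0" "summable (\<lambda>m. f (int m))" "summable (\<lambda>m. f (- int m - 1))"
  shows "f summable_on UNIV"
proof -
  have inj: "inj (\<lambda>m::nat. - int m - 1)"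
    by (simp add: inj_def)
  have nonneg: "f summable_on range int"
    using summable_on_reindex[of int UNIV f] assms(1,2)
    by (simp add: summable_on_UNIV_nonneg_real_iff o_def)
  have neg: "f summable_on range (\<lambda>m::nat. - int m - 1)"
    using summable_on_reindex[of "\<lambda>m::nat. - int m - 1" UNIV f] inj assms(1,3)
    by (simp add: summable_on_UNIV_nonneg_real_iff o_def)
  have disjoint: "range int \<inter> range (\<lambda>m::nat. - int m - 1) = {}"
    by auto
  have "n \<in> range int \<union> range (\<lambda>m::nat. - int m - 1)" for n
  proof (cases "n \<ge> 0")
    case True
    then have "n = int (nat n)"
      by simp
    then show ?thesis
      by blast
  next
    case False
    then have "n = - int (nat (- n - 1)) - 1"
      by simp
    then show ?thesis
      by blast
  qed
  then have "range int \<union> range (\<lambda>m::nat. - int m - 1) = UNIV"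
    by blast
  then show ?thesis
    using summable_on_Un_disjoint[OF nonneg neg disjoint] by simp
qed

lemma summable_power_div_2:
  fixes r :: real
  assumes "0 \<le> r" "r < 1"
  shows "summable (\<lambda>m. r ^ (m div 2))"
proof -
  define t where "t = sqrt (max r (1/2))"
  have t: "0 < t" "t < 1" "r \<le> t\<^sup>2"
    using assms by (auto simp: t_def)
  have bound: "r ^ (m div 2) \<le> t ^ m / t" for m
  proof -
    have "r ^ (m div 2) \<le> (t\<^sup>2) ^ (m div 2)"
      using assms t by (intro power_mono) auto
    also have "\<dots> = t ^ (2 * (m div 2) + 1) / t"
      using t by (simp add: power_mult)
    also have "\<dots> \<le> t ^ m / t"
      using t by (intro divide_right_mono power_decreasing) auto
    finally show ?thesis .
  qed
  have "summable (\<lambda>m. t ^ m / t)"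
    using t by (intro summable_divide summable_geometric) simp
  then show ?thesis
    by (rule summable_comparison_test'[where N = 0]) (use bound assms(1) in simp)
qed

lemma l2Z6_if_geometric_bounds:
  assumes right: "\<And>n j. n \<ge> 0 \<Longrightarrow> cmod (u n j) \<le> K1 * r1 powi (n div 2)"
    and left: "\<And>n j. n < 0 \<Longrightarrow> cmod (u n j) \<le> K2 * r2 powi (n div 2)"
    and "0 \<le> r1" "r1 < 1" "r2 > 1" "0 \<le> K2" and "\<And>n j. j \<notin> {1..6} \<Longrightarrow> u n j = 0"
  shows "u \<in> l2Z6"
proof -
  have "(\<lambda>n. (cmod (u n j))\<^sup>2) summable_on UNIV" for j
  proof (rule summable_on_int_if_summable_halves)
    have bound_right: "(cmod (u (int m) j))\<^sup>2 \<le> K1\<^sup>2 * (r1\<^sup>2) ^ (m div 2)" for m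
    proof -
      have "cmod (u (int m) j) \<le> K1 * r1 ^ (m div 2)"
        using right[of "int m" j] by (simp add: zdiv_int flip: power_int_of_nat)
      then have "(cmod (u (int m) j))\<^sup>2 \<le> (K1 * r1 ^ (m div 2))\<^sup>2"
        by (intro power_mono) auto
      then show ?thesis
        by (simp add: power2_eq_square power_mult_distrib mult_ac)
    qed
    have "summable (\<lambda>m. K1\<^sup>2 * (r1\<^sup>2) ^ (m div 2))"
      using assms(3,4) by (intro summable_mult summable_power_div_2) (auto simp: abs_square_less_1)
    then show "summable (\<lambda>m. (cmod (u (int m) j))\<^sup>2)"
      by (rule summable_comparison_test'[where N = 0]) (simp add: bound_right)
    have bound_left: "(cmod (u (- int m - 1) j))\<^sup>2 \<le> K2\<^sup>2 * ((inverse r2)\<^sup>2) ^ (m div 2)" for m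
    proof -
      have "(- int m - 1) div 2 = - int (m div 2) - 1"
        by presburger
      then have "r2 powi ((- int m - 1) div 2) = inverse r2 ^ (m div 2) * inverse r2"
        by (simp add: power_int_def nat_add_distrib)
      also have "\<dots> \<le> inverse r2 ^ (m div 2)"
        using assms(5) by (intro mult_left_le) (auto simp: inverse_le_1_iff)
      finally have "cmod (u (- int m - 1) j) \<le> K2 * inverse r2 ^ (m div 2)"
        using left[of "- int m - 1" j] mult_left_mono[OF _ \<open>0 \<le> K2\<close>] by force
      then have "(cmod (u (- int m - 1) j))\<^sup>2 \<le> (K2 * inverse r2 ^ (m div 2))\<^sup>2"
        by (intro power_mono) auto
      then show ?thesis
        by (simp add: power2_eq_square power_mult_distrib mult_ac)
    qed
    have "summable (\<lambda>m. K2\<^sup>2 * ((inverse r2)\<^sup>2) ^ (m div 2))"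
      using assms(5) by (intro summable_mult summable_power_div_2) (auto simp: abs_square_less_1 inverse_less_1_iff)
    then show "summable (\<lambda>m. (cmod (u (- int m - 1) j))\<^sup>2)"
      by (rule summable_comparison_test'[where N = 0]) (simp add: bound_left)
  qed simp
  then show ?thesis
    using assms(7) by (simp add: l2Z6_def)
qed

section \<open>Bloch modes\<close>

lemma bulk_eqs_cong:
  assumes "\<And>j. j \<in> {4,5,6} \<Longrightarrow> w n j = w' n j" "w (n - 1) 6 = w' (n - 1) 6" "w (n + 1) 4 = w' (n + 1) 4"
  shows "bulk_eqs b e k w n \<longleftrightarrow> bulk_eqs b e k w' n"
  using assms by (simp add: bulk_eqs_def)

lemma bulk_eqs_scale:
  assumes "bulk_eqs b e k w n"
  shows "bulk_eqs b e k (\<lambda>n j. a * w n j) n"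
proof -
  have "x * (a * y) + z * (a * y') + t * (a * y'') = a * (x * y + z * y' + t * y'')" for x y z y' t y'' :: complex
    by (simp add: algebra_simps)
  then show ?thesis
    using assms by (simp add: bulk_eqs_def)
qed

text \<open>The mode with Bloch factor \<open>l\<close> generated by the interface data \<open>x\<close>: the cell \<open>m\<close>, made of the
  sites \<open>2 m\<close> and \<open>2 m + 1\<close>, carries \<open>l ^ m\<close> times the components produced from \<open>x\<close> by \<open>T1\<close>
  and \<open>T2\<close>.\<close>

definition bloch_mode :: "real \<Rightarrow> real \<Rightarrow> real \<Rightarrow> complex \<Rightarrow> complex^2 \<Rightarrow> int \<Rightarrow> nat \<Rightarrow> complex" where
  "bloch_mode b e k l x n j = (let y = T1 b e k *v x; z = T2 b e k *v y in
     l powi (n div 2) *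
       (if even n then (if j = 4 then x$1 else if j = 5 then y$2 else if j = 6 then y$1 else 0)
        else (if j = 4 then z$2 else if j = 5 then z$1 else if j = 6 then l * x$2 else 0)))"

lemma bloch_mode_cell:
  assumes "l \<noteq> 0"
  shows "vector [bloch_mode b e k l x (2 * m) 4, bloch_mode b e k l x (2 * m - 1) 6] = l powi m *s x"
    and "vector [bloch_mode b e k l x (2 * m) 6, bloch_mode b e k l x (2 * m) 5]
           = l powi m *s (T1 b e k *v x)"
    and "vector [bloch_mode b e k l x (2 * m + 1) 5, bloch_mode b e k l x (2 * m + 1) 4]
           = l powi m *s (T2 b e k *v (T1 b e k *v x))"
proof -
  have "2 * m - 1 = 2 * (m - 1) + 1" "(2 * (m - 1) + 1) div 2 = m - 1" "(2 * m + 1) div 2 = m"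
    by simp_all
  moreover have "l powi (m - 1) * (l * z) = l powi m * z" for z
    using assms by (simp add: power_int_diff field_simps)
  ultimately show "vector [bloch_mode b e k l x (2 * m) 4, bloch_mode b e k l x (2 * m - 1) 6] = l powi m *s x"
    "vector [bloch_mode b e k l x (2 * m) 6, bloch_mode b e k l x (2 * m) 5] = l powi m *s (T1 b e k *v x)"
    "vector [bloch_mode b e k l x (2 * m + 1) 5, bloch_mode b e k l x (2 * m + 1) 4]
       = l powi m *s (T2 b e k *v (T1 b e k *v x))"
    by (simp_all add: bloch_mode_def Let_def vec2_eq_iff)
qed

lemma bulk_eqs_bloch_mode:
  assumes "b > 0" "b + e > 0" "l \<noteq> 0" "Pmat b e k *v x = l *s x"
  shows "bulk_eqs b e k (bloch_mode b e k l x) n"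
proof -
  have pair: "bulk_eqs b e k (bloch_mode b e k l x) (2 * m) \<and> bulk_eqs b e k (bloch_mode b e k l x) (2 * m + 1)"
    for m
  proof -
    have idx: "2 * (m + 1) = 2 * m + 2" "2 * m + 2 - 1 = 2 * m + 1"
      by simp_all
    have "vector [bloch_mode b e k l x (2 * m + 2) 4, bloch_mode b e k l x (2 * m + 1) 6]
        = l powi (m + 1) *s x"
      using bloch_mode_cell(1)[OF assms(3), of b e k x "m + 1"] unfolding idx .
    also have "\<dots> = l powi m *s (l *s x)"
      using assms(3) by (simp add: power_int_add vector_smult_assoc mult.commute)
    also have "l *s x = T3 b e k *v (T2 b e k *v (T1 b e k *v x))"
      using assms(4) by (simp add: Pmat_eq_transfers matrix_vector_mul_assoc matrix_mul_assoc)
    finally have "vector [bloch_mode b e k l x (2 * m + 2) 4, bloch_mode b e k l x (2 * m + 1) 6]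
        = l powi m *s (T3 b e k *v (T2 b e k *v (T1 b e k *v x)))" .
    then show ?thesis
      using bloch_mode_cell[OF assms(3), of b e k x m]
      by (simp add: bulk_eqs_pair_iff_transfer[OF assms(1,2)] vector_scalar_commute)
  qed
  obtain m where "n = 2 * m \<or> n = 2 * m + 1"
    by (metis evenE oddE)
  then show ?thesis
    using pair by auto
qed

lemma bloch_mode_boundary:
  assumes "l \<noteq> 0"
  shows "vector [bloch_mode b e k l x 0 4, bloch_mode b e k l x (-1) 6] = x"
  using bloch_mode_cell(1)[OF assms, of b e k x 0] by simp

lemma bloch_mode_bound: "\<exists>K\<ge>0. \<forall>n j. cmod (bloch_mode b e k l x n j) \<le> K * cmod l powi (n div 2)"
proof -
  define y z where "y = T1 b e k *v x" and "z = T2 b e k *v y"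
  define p where "p n j = (if even n then (if j = 4 then x$1 else if j = 5 then y$2 else if j = 6 then y$1 else 0)
    else (if j = 4 then z$2 else if j = 5 then z$1 else if j = 6 then l * x$2 else 0))" for n :: int and j :: nat
  define K where "K = cmod (x$1) + cmod (y$1) + cmod (y$2) + cmod (z$1) + cmod (z$2) + cmod (l * x$2)"
  have "cmod (p n j) \<le> K" for n j
    by (simp add: p_def K_def)
  moreover have "bloch_mode b e k l x n j = l powi (n div 2) * p n j" for n j
    by (simp add: bloch_mode_def Let_def p_def y_def z_def)
  ultimately have "cmod (bloch_mode b e k l x n j) \<le> K * cmod l powi (n div 2)" for n j
    by (simp add: norm_mult norm_power_int mult.commute mult_right_mono)
  moreover have "K \<ge> 0"
    by (simp add: K_def)
  ultimately show ?thesis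
    by blast
qed

section \<open>A conjugation symmetry\<close>

definition conj_swap :: "real \<Rightarrow> (int \<Rightarrow> nat \<Rightarrow> complex) \<Rightarrow> int \<Rightarrow> nat \<Rightarrow> complex" where
  "conj_swap k u n j =
     (if j \<in> {1,2,3} then cis (- (k * n)) * cnj (u n (j + 3))
      else if j \<in> {4,5,6} then cis (- (k * n)) * cnj (u n (j - 3)) else 0)"

lemma HI_conj_swap: "HI bp dp bm dm c k (conj_swap k u) = conj_swap k (HI bp dp bm dm c k u)"
proof (intro ext)
  fix n j
  define \<omega> where "\<omega> = inverse (cis (k * of_int n))"
  have "- (k * of_int (n - 1)) = - (k * of_int n) + k" "- (k * of_int (n + 1)) = - (k * of_int n) + - k"
    by (simp_all add: algebra_simps)
  then have shift: "cis (- (k * of_int (n - 1))) = \<omega> * cis k"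
    "cis (- (k * of_int (n + 1))) = \<omega> * inverse (cis k)" "cis (- (k * of_int n)) = \<omega>"
    by (simp_all only: cis_mult \<omega>_def cis_inverse)
  have swap: "conj_swap k u n 1 = \<omega> * cnj (u n 4)" "conj_swap k u n 2 = \<omega> * cnj (u n 5)"
    "conj_swap k u n 3 = \<omega> * cnj (u n 6)" "conj_swap k u n 4 = \<omega> * cnj (u n 1)"
    "conj_swap k u n 5 = \<omega> * cnj (u n 2)" "conj_swap k u n 6 = \<omega> * cnj (u n 3)"
    "conj_swap k u (n - 1) 3 = \<omega> * cis k * cnj (u (n - 1) 6)"
    "conj_swap k u (n - 1) 6 = \<omega> * cis k * cnj (u (n - 1) 3)"
    "conj_swap k u (n + 1) 1 = \<omega> * inverse (cis k) * cnj (u (n + 1) 4)"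
    "conj_swap k u (n + 1) 4 = \<omega> * inverse (cis k) * cnj (u (n + 1) 1)"
    by (simp_all add: conj_swap_def shift del: of_int_diff of_int_add)
  have phases: "cnj (cis (k * of_int n)) = inverse (cis (k * of_int n))" "cnj (cis k) = inverse (cis k)"
    "cis (- k) = inverse (cis k)"
    by (simp_all add: cis_cnj)
  have "cis (k * of_int n) \<noteq> 0" "cis k \<noteq> 0"
    by simp_all
  then have "HI bp dp bm dm c k (conj_swap k u) n j = \<omega> * cnj (HI bp dp bm dm c k u n j')"
    if "j \<in> {1..6}" "j' = (if j \<le> 3 then j + 3 else j - 3)" for j j'
  proof -
    from that consider "j = 1" "j' = 4" | "j = 2" "j' = 5" | "j = 3" "j' = 6" | "j = 4" "j' = 1"
      | "j = 5" "j' = 2" | "j = 6" "j' = 3"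
      by force
    then show ?thesis
      by cases (simp_all only: HI_rows swap \<omega>_def phases complex_cnj_mult complex_cnj_add
          complex_cnj_minus complex_cnj_complex_of_real complex_cnj_inverse,
          (simp add: field_simps del: cis_inverse cis_cnj)+)
  qed
  then show "HI bp dp bm dm c k (conj_swap k u) n j = conj_swap k (HI bp dp bm dm c k u) n j"
    by (cases "j \<in> {1..6}") (auto simp: conj_swap_def \<omega>_def HI_rows(7) cis_inverse)
qed

lemma conj_swap_conj_swap:
  assumes "\<And>n j. j \<notin> {1..6} \<Longrightarrow> u n j = 0"
  shows "conj_swap k (conj_swap k u) = u"
proof (intro ext)
  fix n j
  have "cis (- (k * of_int n)) * (cis (k * of_int n) * z) = z" for z
    by (simp add: cis_mult flip: mult.assoc)
  then show "conj_swap k (conj_swap k u) n j = u n j"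
    using assms[of j n] by (auto simp: conj_swap_def cis_cnj)
qed

lemma conj_swap_l2Z6:
  assumes "u \<in> l2Z6"
  shows "conj_swap k u \<in> l2Z6"
proof -
  have "(\<lambda>n. (cmod (conj_swap k u n j))\<^sup>2) summable_on UNIV" for j
  proof -
    have "(\<lambda>n. (cmod (conj_swap k u n j))\<^sup>2) =
        (if j \<in> {1,2,3} then (\<lambda>n. (cmod (u n (j + 3)))\<^sup>2)
         else if j \<in> {4,5,6} then (\<lambda>n. (cmod (u n (j - 3)))\<^sup>2) else (\<lambda>n. 0))"
      by (auto simp: conj_swap_def norm_mult)
    then show ?thesis
      using assms by (simp add: l2Z6_def)
  qed
  then show ?thesis
    by (auto simp: l2Z6_def conj_swap_def)
qed

lemma conj_swap_kerHI:
  assumes "u \<in> kerHI bp dp bm dm c k"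
  shows "conj_swap k u \<in> kerHI bp dp bm dm c k"
proof -
  have "conj_swap k (\<lambda>n j. 0) = (\<lambda>n j. 0)"
    by (simp add: fun_eq_iff conj_swap_def)
  then show ?thesis
    using assms by (simp add: kerHI_def HI_conj_swap conj_swap_l2Z6)
qed

lemma conj_swap_independent:
  assumes "V 0 4 \<noteq> 0 \<or> V (-1) 6 \<noteq> 0" "\<And>n j. j \<notin> {4,5,6} \<Longrightarrow> V n j = 0"
    and "(\<lambda>n j. a * V n j + b * conj_swap k V n j) = (\<lambda>n j. 0)"
  shows "a = 0 \<and> b = 0"
proof -
  have sum0: "a * V n j + b * conj_swap k V n j = 0" for n j
    using fun_cong[OF fun_cong[OF assms(3), of n], of j] by simp
  have "a * V 0 4 = 0" "a * V (-1) 6 = 0"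
    using sum0[of 0 4] sum0[of "-1" 6] assms(2) by (simp_all add: conj_swap_def)
  moreover have "b * cnj (V 0 4) = 0" "b * cnj (V (-1) 6) = 0"
    using sum0[of 0 1] sum0[of "-1" 3] assms(2) by (simp_all add: conj_swap_def)
  ultimately show ?thesis
    using assms(1) by auto
qed

section \<open>Zero modes of the interface Hamiltonian\<close>

lemma HI_diff: "HI bp dp bm dm c k (\<lambda>n j. u n j - a * w n j) n j
    = HI bp dp bm dm c k u n j - a * HI bp dp bm dm c k w n j"
  by (simp add: HI_def Let_def algebra_simps)

context interface
begin

lemma coefficients_nonzero:
  "complex_of_real (bseq bp bm n) \<noteq> 0" "complex_of_real (cseq bp dp bm dm c n) \<noteq> 0"
  "complex_of_real (dseq bp dp bm dm n) \<noteq> 0"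
  using bp_pos bm_pos bdp_pos bdm_pos c_pos by (auto simp: bseq_def cseq_def dseq_def)

lemma B_mode_if_kerHI: "u \<in> kerHI bp dp bm dm c k \<Longrightarrow> B_mode u"
  by (simp add: kerHI_def B_mode_def)

lemma B_mode_diff: "B_mode u \<Longrightarrow> B_mode w \<Longrightarrow> B_mode (\<lambda>n j. u n j - a * w n j)"
  by (simp add: B_mode_def HI_diff)

lemma B_mode_eq_0_if_boundary_eq_0:
  assumes "B_mode u" "u 0 4 = 0" "u (-1) 6 = 0" "j \<in> {4,5,6}"
  shows "u n j = 0"
proof -
  have row1: "of_real (bseq bp bm n) * u n 4 + of_real (bseq bp bm n) * u n 5
      + of_real (cseq bp dp bm dm c (n - 1)) * cis (- k) * u (n - 1) 6 = 0"
    and row2: "of_real (bseq bp bm n) * u n 4 + of_real (dseq bp dp bm dm n) * cis k * u n 5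
      + of_real (bseq bp bm n) * u n 6 = 0"
    and row3: "of_real (cseq bp dp bm dm c n) * u (n + 1) 4 + of_real (bseq bp bm n) * u n 5
      + of_real (bseq bp bm n) * u n 6 = 0" for n
    using assms(1) unfolding B_mode_def HI_upper_rows_eq_0_iff by blast+
  note nz = coefficients_nonzero
  have seed: "u i 4 = 0 \<and> u (i - 1) 6 = 0" for i
  proof (induction i rule: int_induct[where k = 0])
    case base
    then show ?case
      using assms(2,3) by simp
  next
    case (step1 i)
    then have 5: "u i 5 = 0"
      using row1[of i] nz by simp
    then have 6: "u i 6 = 0"
      using row2[of i] step1 nz by simp
    then show ?case
      using row3[of i] 5 nz by simp
  next
    case (step2 i)
    then have 5: "u (i - 1) 5 = 0"
      using row3[of "i - 1"] nz by simp
    then have 4: "u (i - 1) 4 = 0"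
      using row2[of "i - 1"] step2 nz by simp
    then show ?case
      using row1[of "i - 1"] 5 nz by simp
  qed
  have "u n 5 = 0"
    using row1[of n] seed[of n] nz by simp
  then show ?thesis
    using assms(4) seed[of n] seed[of "n + 1"] by auto
qed

lemma B_mode_eq_if_boundary_eq:
  assumes "B_mode u" "B_mode w" "vector [u 0 4, u (-1) 6] = a *s (vector [w 0 4, w (-1) 6] :: complex^2)"
    "j \<in> {4,5,6}"
  shows "u n j = a * w n j"
proof -
  have "u 0 4 = a * w 0 4" "u (-1) 6 = a * w (-1) 6"
    using assms(3) unfolding vec2_eq_iff by simp_all
  then show ?thesis
    using B_mode_eq_0_if_boundary_eq_0[OF B_mode_diff[OF assms(1,2)], of a j n] assms(4) by simp
qed

lemma HI_eq_0_if_B_mode: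
  assumes "B_mode u" "\<And>n j. j \<notin> {4,5,6} \<Longrightarrow> u n j = 0"
  shows "H u = (\<lambda>n j. 0)"
proof (intro ext)
  fix n j
  show "H u n j = 0"
  proof (cases "j \<in> {1,2,3}")
    case True
    then show ?thesis
      using assms(1) unfolding B_mode_def by blast
  next
    case False
    then consider "j = 4" | "j = 5" | "j = 6" | "j \<notin> {1..6}"
      by force
    then show ?thesis
      using assms(2) by cases (simp_all add: HI_rows)
  qed
qed

end

locale interface_spectral = interface +
  fixes l1 l2 :: complex and v1 v2 :: "complex^2"
  assumes l1_lt_1: "cmod l1 < 1" and v1_nonzero: "v1 \<noteq> 0"
    and v1_eigen: "Pmat bp dp k *v v1 = l1 *s v1"
    and l2_gt_1: "cmod l2 > 1" and v2_nonzero: "v2 \<noteq> 0"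
    and v2_eigen: "Pmat bm dm k *v v2 = l2 *s v2"
begin

text \<open>A zero mode is determined by its interface data \<open>x = (u 0 4, u (-1) 6)\<close>. After the
  rescaling of \<open>B_mode_iff_bulk_eqs\<close>, this datum is the first cell of a solution decaying to the
  right and of one decaying to the left, so it has to lie on the corresponding eigenlines.\<close>

definition admissible :: "complex^2 \<Rightarrow> bool" where
  "admissible x \<longleftrightarrow> (\<exists>\<alpha>. vector [x$1, of_real (c / (bp + dp)) * x$2] = \<alpha> *s v1) \<and>
                     (\<exists>\<beta>. vector [of_real (c / (bm + dm)) * x$1, x$2] = \<beta> *s v2)"

lemma admissible_if_l2Z6_B_mode:
  assumes "u \<in> l2Z6" "B_mode u"
  shows "admissible (vector [u 0 4, u (-1) 6])"
proof -
  define wr wl where "wr = rescale (-1) 6 (c / (bp + dp)) u" and "wl = rescale 0 4 (c / (bm + dm)) u"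
  have right: "bulk_eqs bp dp k wr n" if "n \<ge> 0" for n
    using assms(2) that unfolding B_mode_iff_bulk_eqs wr_def by blast
  have left: "bulk_eqs bm dm k wl n" if "n \<le> -1" for n
    using assms(2) that unfolding B_mode_iff_bulk_eqs wl_def by blast
  have "\<exists>\<alpha>. vector [wr 0 4, wr (-1) 6] = \<alpha> *s v1"
  proof (rule right_decaying_bulk_solution_eigenline[OF bp_pos bdp_pos right _ _ v1_eigen v1_nonzero l1_lt_1])
    have "(\<lambda>m. u (2 * int m) 4) \<longlonglongrightarrow> 0"
      by (rule l2Z6_LIMSEQ_0[OF assms(1)]) (simp add: inj_def)
    then show "(\<lambda>m. wr (2 * int m) 4) \<longlonglongrightarrow> 0"
      by (simp add: wr_def rescale_def)
    have "(\<lambda>m. u (2 * int m + 1) 6) \<longlonglongrightarrow> 0"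
      by (rule l2Z6_LIMSEQ_0[OF assms(1)]) (simp add: inj_def)
    moreover have "2 * int m + 1 \<noteq> -1" for m
      by linarith
    ultimately show "(\<lambda>m. wr (2 * int m + 1) 6) \<longlonglongrightarrow> 0"
      by (simp add: wr_def rescale_def)
  qed
  moreover have "\<exists>\<beta>. vector [wl 0 4, wl (-1) 6] = \<beta> *s v2"
  proof (rule left_decaying_bulk_solution_eigenline[OF bm_pos bdm_pos left _ _ v2_eigen v2_nonzero l2_gt_1])
    have "(\<lambda>m. u (- 2 * int m - 2) 4) \<longlonglongrightarrow> 0"
      by (rule l2Z6_LIMSEQ_0[OF assms(1)]) (simp add: inj_def)
    moreover have "- 2 * int m - 2 \<noteq> 0" for m
      by linarith
    ultimately show "(\<lambda>m. wl (- 2 * int m - 2) 4) \<longlonglongrightarrow> 0"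
      by (simp add: wl_def rescale_def)
    have "(\<lambda>m. u (- 2 * int m - 1) 6) \<longlonglongrightarrow> 0"
      by (rule l2Z6_LIMSEQ_0[OF assms(1)]) (simp add: inj_def)
    then show "(\<lambda>m. wl (- 2 * int m - 1) 6) \<longlonglongrightarrow> 0"
      by (simp add: wl_def rescale_def)
  qed
  ultimately show ?thesis
    by (simp add: admissible_def wr_def wl_def rescale_def)
qed

lemma admissible_unique:
  assumes "admissible x" "admissible y" "x \<noteq> 0"
  shows "\<exists>a. y = a *s x"
proof -
  define \<rho> :: complex where "\<rho> = of_real (c / (bp + dp))"
  have "\<rho> \<noteq> 0"
    using c_pos bdp_pos by (simp add: \<rho>_def del: of_real_add)
  obtain \<alpha> \<alpha>' where \<alpha>: "vector [x$1, \<rho> * x$2] = \<alpha> *s v1" "vector [y$1, \<rho> * y$2] = \<alpha>' *s v1"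
    using assms(1,2) unfolding admissible_def \<rho>_def by blast
  then have e: "x$1 = \<alpha> * v1$1" "\<rho> * x$2 = \<alpha> * v1$2" "y$1 = \<alpha>' * v1$1" "\<rho> * y$2 = \<alpha>' * v1$2"
    by (simp_all add: vec2_eq_iff)
  have "\<alpha> \<noteq> 0"
    using e(1,2) assms(3) \<open>\<rho> \<noteq> 0\<close> by (auto simp: vec2_eq_iff)
  have "\<rho> * (\<alpha> * y$2) = \<alpha> * (\<alpha>' * v1$2)"
    using e(4) by (metis mult.left_commute)
  also have "\<dots> = \<rho> * (\<alpha>' * x$2)"
    using e(2) by (metis mult.left_commute)
  finally have "\<alpha> * y$2 = \<alpha>' * x$2"
    using \<open>\<rho> \<noteq> 0\<close> by simp
  then have "y = (\<alpha>' / \<alpha>) *s x"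
    using e(1,3) \<open>\<alpha> \<noteq> 0\<close> by (simp add: vec2_eq_iff field_simps)
  then show ?thesis
    by blast
qed

lemma eigenvalues_nonzero: "l1 \<noteq> 0" "l2 \<noteq> 0"
proof -
  have "l1 * (Pmat bp dp k $ 1 $ 1 + Pmat bp dp k $ 2 $ 2 - l1) = det (Pmat bp dp k)"
    by (rule eigenvalue_2x2_quadratic[OF v1_eigen v1_nonzero])
  then show "l1 \<noteq> 0"
    using norm_det_Pmat[OF bp_pos bdp_pos, of k] by auto
  show "l2 \<noteq> 0"
    using l2_gt_1 by auto
qed

definition glued_mode :: "complex \<Rightarrow> complex \<Rightarrow> int \<Rightarrow> nat \<Rightarrow> complex" where
  "glued_mode \<alpha> \<beta> n j = (if j \<in> {4,5,6} then
     if n \<ge> 0 then \<alpha> * bloch_mode bp dp k l1 v1 n j else \<beta> * bloch_mode bm dm k l2 v2 n j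
   else 0)"

context
  fixes x :: "complex^2" and \<alpha> \<beta> :: complex
  assumes right_cell: "vector [x$1, of_real (c / (bp + dp)) * x$2] = \<alpha> *s v1"
    and left_cell: "vector [of_real (c / (bm + dm)) * x$1, x$2] = \<beta> *s v2"
begin

lemma glued_mode_boundary: "vector [glued_mode \<alpha> \<beta> 0 4, glued_mode \<alpha> \<beta> (-1) 6] = x"
  using bloch_mode_boundary[OF eigenvalues_nonzero(1), of bp dp k v1]
    bloch_mode_boundary[OF eigenvalues_nonzero(2), of bm dm k v2] right_cell left_cell
  by (simp add: glued_mode_def vec2_eq_iff)

lemma glued_mode_B_mode: "B_mode (glued_mode \<alpha> \<beta>)"
proof -
  let ?V = "glued_mode \<alpha> \<beta>"
  note boundary1 = bloch_mode_boundary[OF eigenvalues_nonzero(1), of bp dp k v1, unfolded vec2_eq_iff]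
  note boundary2 = bloch_mode_boundary[OF eigenvalues_nonzero(2), of bm dm k v2, unfolded vec2_eq_iff]
  have "bulk_eqs bp dp k (rescale (-1) 6 (c / (bp + dp)) ?V) n" if "n \<ge> 0" for n
  proof -
    have "bulk_eqs bp dp k (\<lambda>n j. \<alpha> * bloch_mode bp dp k l1 v1 n j) n"
      by (intro bulk_eqs_scale bulk_eqs_bloch_mode bp_pos bdp_pos eigenvalues_nonzero v1_eigen)
    moreover have "of_real (c / (bp + dp)) * (\<beta> * v2$2) = \<alpha> * v1$2"
      using right_cell left_cell by (simp add: vec2_eq_iff)
    ultimately show ?thesis
      using that boundary1 boundary2
      by (subst bulk_eqs_cong[where w' = "\<lambda>n j. \<alpha> * bloch_mode bp dp k l1 v1 n j"])
        (auto simp: rescale_def glued_mode_def)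
  qed
  moreover have "bulk_eqs bm dm k (rescale 0 4 (c / (bm + dm)) ?V) n" if "n \<le> -1" for n
  proof -
    have "bulk_eqs bm dm k (\<lambda>n j. \<beta> * bloch_mode bm dm k l2 v2 n j) n"
      by (intro bulk_eqs_scale bulk_eqs_bloch_mode bm_pos bdm_pos eigenvalues_nonzero v2_eigen)
    moreover have "of_real (c / (bm + dm)) * (\<alpha> * v1$1) = \<beta> * v2$1"
      using right_cell left_cell by (simp add: vec2_eq_iff)
    ultimately show ?thesis
      using that boundary1 boundary2
      by (subst bulk_eqs_cong[where w' = "\<lambda>n j. \<beta> * bloch_mode bm dm k l2 v2 n j"])
        (auto simp: rescale_def glued_mode_def)
  qed
  ultimately show ?thesis
    by (simp add: B_mode_iff_bulk_eqs)
qed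

lemma glued_mode_l2Z6: "glued_mode \<alpha> \<beta> \<in> l2Z6"
proof -
  obtain K1 where K1: "K1 \<ge> 0" "\<And>n j. cmod (bloch_mode bp dp k l1 v1 n j) \<le> K1 * cmod l1 powi (n div 2)"
    using bloch_mode_bound by blast
  obtain K2 where K2: "K2 \<ge> 0" "\<And>n j. cmod (bloch_mode bm dm k l2 v2 n j) \<le> K2 * cmod l2 powi (n div 2)"
    using bloch_mode_bound by blast
  show ?thesis
  proof (rule l2Z6_if_geometric_bounds)
    show "cmod (glued_mode \<alpha> \<beta> n j) \<le> (cmod \<alpha> * K1) * cmod l1 powi (n div 2)" if "n \<ge> 0" for n j
      using that mult_left_mono[OF K1(2), of "cmod \<alpha>"] K1(1)
      by (simp add: glued_mode_def norm_mult mult.assoc)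
    show "cmod (glued_mode \<alpha> \<beta> n j) \<le> (cmod \<beta> * K2) * cmod l2 powi (n div 2)" if "n < 0" for n j
      using that mult_left_mono[OF K2(2), of "cmod \<beta>"] K2(1)
      by (simp add: glued_mode_def norm_mult mult.assoc)
  qed (use l1_lt_1 l2_gt_1 K2(1) in \<open>auto simp: glued_mode_def\<close>)
qed

end

lemma kerHI_B_part:
  assumes "x \<noteq> 0" "admissible x" "B_mode V" "vector [V 0 4, V (-1) 6] = x"
    and "u \<in> kerHI bp dp bm dm c k"
  shows "\<exists>a. \<forall>n. \<forall>j\<in>{4,5,6}. u n j = a * V n j"
proof -
  have "u \<in> l2Z6" "B_mode u"
    using assms(5) B_mode_if_kerHI by (auto simp: kerHI_def)
  then obtain a where "vector [u 0 4, u (-1) 6] = a *s x"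
    using admissible_unique[OF assms(2) admissible_if_l2Z6_B_mode assms(1)] by blast
  then show ?thesis
    using B_mode_eq_if_boundary_eq[OF \<open>B_mode u\<close> assms(3)] assms(4) by blast
qed

text \<open>The components 1 to 3 of a zero mode \<open>u\<close> are those of \<open>conj_swap k u\<close> in 4 to 6, swapped back.\<close>

lemma kerHI_span:
  assumes "x \<noteq> 0" "admissible x" "B_mode V" "vector [V 0 4, V (-1) 6] = x"
    and V_off: "\<And>n j. j \<notin> {4,5,6} \<Longrightarrow> V n j = 0" and u: "u \<in> kerHI bp dp bm dm c k"
  shows "\<exists>a b. u = (\<lambda>n j. a * V n j + b * conj_swap k V n j)"
proof -
  obtain a where a: "\<forall>n. \<forall>j\<in>{4,5,6}. u n j = a * V n j"
    using kerHI_B_part[OF assms(1-4) u] by blast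
  obtain a' where a': "\<forall>n. \<forall>j\<in>{4,5,6}. conj_swap k u n j = a' * V n j"
    using kerHI_B_part[OF assms(1-4) conj_swap_kerHI[OF u]] by blast
  have u_off: "u n j = 0" if "j \<notin> {1..6}" for n j
    using u that by (simp add: kerHI_def l2Z6_def)
  have "u n j = a * V n j + cnj a' * conj_swap k V n j" for n j
  proof -
    consider "j \<in> {1,2,3}" | "j \<in> {4,5,6}" | "j \<notin> {1..6}"
      by force
    then show ?thesis
    proof cases
      case 1
      then have "u n j = conj_swap k (conj_swap k u) n j"
        using conj_swap_conj_swap[of u k] u_off by simp
      also have "\<dots> = cis (- (k * n)) * cnj (a' * V n (j + 3))"
        using 1 a' by (auto simp: conj_swap_def[of k "conj_swap k u"])
      finally have "u n j = cis (- (k * n)) * cnj (a' * V n (j + 3))" .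
      moreover have "V n j = 0"
        using 1 V_off by auto
      ultimately show ?thesis
        using 1 by (simp add: conj_swap_def ac_simps)
    next
      case 2
      then show ?thesis
        using a V_off by (auto simp: conj_swap_def)
    next
      case 3
      then have "j \<notin> {1,2,3}" "j \<notin> {4,5,6}"
        by auto
      then show ?thesis
        using 3 u_off V_off by (simp add: conj_swap_def)
    qed
  qed
  then show ?thesis
    by blast
qed

lemma admissible_if_cdim_two:
  assumes "cdim_two (kerHI bp dp bm dm c k)"
  shows "\<exists>x. x \<noteq> 0 \<and> admissible x"
proof -
  obtain v w where v: "v \<in> kerHI bp dp bm dm c k"
    and indep: "\<forall>a b. (\<lambda>n j. a * v n j + b * w n j) = (\<lambda>n j. 0) \<longrightarrow> a = 0 \<and> b = 0"
    using assms unfolding cdim_two_def by blast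
  have "v \<noteq> (\<lambda>n j. 0)"
    using indep[rule_format, of 1 0] by auto
  then obtain n j where "v n j \<noteq> 0"
    by blast
  moreover have "v \<in> l2Z6"
    using v by (simp add: kerHI_def)
  ultimately have "j \<in> {1..6}"
    by (auto simp: l2Z6_def)
  obtain u j' where u: "u \<in> kerHI bp dp bm dm c k" "j' \<in> {4,5,6}" "u n j' \<noteq> 0"
  proof (cases "j \<in> {4,5,6}")
    case True
    then show ?thesis
      using that v \<open>v n j \<noteq> 0\<close> by blast
  next
    case False
    then have "j + 3 \<in> {4,5,6}" "conj_swap k v n (j + 3) \<noteq> 0"
      using \<open>j \<in> {1..6}\<close> \<open>v n j \<noteq> 0\<close> by (auto simp: conj_swap_def)
    then show ?thesis
      using that conj_swap_kerHI[OF v] by blast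
  qed
  have "u \<in> l2Z6" "B_mode u"
    using u(1) B_mode_if_kerHI by (auto simp: kerHI_def)
  moreover have "vector [u 0 4, u (-1) 6] \<noteq> (0 :: complex^2)"
    using B_mode_eq_0_if_boundary_eq_0[OF \<open>B_mode u\<close> _ _ u(2)] u(3) by (auto simp: vec2_eq_iff)
  ultimately show ?thesis
    using admissible_if_l2Z6_B_mode by blast
qed

lemma cdim_two_if_admissible:
  assumes "x \<noteq> 0" "admissible x"
  shows "cdim_two (kerHI bp dp bm dm c k)"
proof -
  obtain \<alpha> \<beta> where cells: "vector [x$1, of_real (c / (bp + dp)) * x$2] = \<alpha> *s v1"
    "vector [of_real (c / (bm + dm)) * x$1, x$2] = \<beta> *s v2"
    using assms(2) unfolding admissible_def by blast
  define V where "V = glued_mode \<alpha> \<beta>"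
  have V_B: "B_mode V" and V_boundary: "vector [V 0 4, V (-1) 6] = x"
    using glued_mode_B_mode[OF cells] glued_mode_boundary[OF cells] by (simp_all add: V_def)
  have V_off: "V n j = 0" if "j \<notin> {4,5,6}" for n j
    using that by (simp add: V_def glued_mode_def)
  have V_ker: "V \<in> kerHI bp dp bm dm c k"
    using glued_mode_l2Z6[OF cells] HI_eq_0_if_B_mode[OF V_B V_off] by (simp add: kerHI_def V_def)
  have "V 0 4 \<noteq> 0 \<or> V (-1) 6 \<noteq> 0"
    using V_boundary assms(1) by (auto simp: vec2_eq_iff)
  then have "a = 0 \<and> b = 0" if "(\<lambda>n j. a * V n j + b * conj_swap k V n j) = (\<lambda>n j. 0)" for a b
    using conj_swap_independent[where V = V and k = k and a = a and b = b] V_off that by blast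
  moreover have "\<exists>a b. u = (\<lambda>n j. a * V n j + b * conj_swap k V n j)" if "u \<in> kerHI bp dp bm dm c k" for u
    using kerHI_span[OF assms V_B V_boundary _ that] V_off by blast
  ultimately show ?thesis
    unfolding cdim_two_def using V_ker conj_swap_kerHI[OF V_ker] by blast
qed

lemma cdim_two_kerHI_iff: "cdim_two (kerHI bp dp bm dm c k) \<longleftrightarrow> (\<exists>x. x \<noteq> 0 \<and> admissible x)"
  using admissible_if_cdim_two cdim_two_if_admissible by blast

end

lemma eigenline_matching_iff:
  fixes m \<rho>1 \<rho>2 :: complex and v1 v2 :: "complex^2"
  assumes "m * \<rho>1 * \<rho>2 = 1" "v1 \<noteq> 0"
  shows "(\<exists>x :: complex^2. x \<noteq> 0 \<and> (\<exists>\<alpha>. vector [x$1, \<rho>1 * x$2] = \<alpha> *s v1) \<and> (\<exists>\<beta>. vector [\<rho>2 * x$1, x$2] = \<beta> *s v2))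
     \<longleftrightarrow> (\<exists>g. g \<noteq> 0 \<and> mat2 1 0 0 m *v v1 = g *s v2)"
proof
  assume "\<exists>x :: complex^2. x \<noteq> 0 \<and> (\<exists>\<alpha>. vector [x$1, \<rho>1 * x$2] = \<alpha> *s v1) \<and> (\<exists>\<beta>. vector [\<rho>2 * x$1, x$2] = \<beta> *s v2)"
  then obtain x :: "complex^2" and \<alpha> \<beta> where "x \<noteq> 0"
    and "vector [x$1, \<rho>1 * x$2] = \<alpha> *s v1" "vector [\<rho>2 * x$1, x$2] = \<beta> *s v2"
    by blast
  then have cells: "x$1 = \<alpha> * v1$1" "\<rho>1 * x$2 = \<alpha> * v1$2" "\<rho>2 * x$1 = \<beta> * v2$1" "x$2 = \<beta> * v2$2"
    by (simp_all add: vec2_eq_iff)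
  have "\<rho>1 \<noteq> 0" "\<rho>2 \<noteq> 0"
    using assms(1) by auto
  then have "\<alpha> \<noteq> 0" "\<beta> \<noteq> 0"
    using cells \<open>x \<noteq> 0\<close> by (auto simp: vec2_eq_iff)
  have "mat2 1 0 0 m *v v1 = (\<beta> / (\<alpha> * \<rho>2)) *s v2"
  proof -
    have "\<alpha> * \<rho>2 * v1$1 = \<beta> * v2$1"
      using cells(1,3) by (simp add: ac_simps)
    moreover have "\<alpha> * \<rho>2 * (m * v1$2) = \<beta> * v2$2"
      using cells(2,4) assms(1) by (metis mult.assoc mult.commute mult.left_commute mult_1)
    ultimately show ?thesis
      using \<open>\<alpha> \<noteq> 0\<close> \<open>\<rho>2 \<noteq> 0\<close> by (simp add: mat2_mult_vector vec2_eq_iff field_simps)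
  qed
  then show "\<exists>g. g \<noteq> 0 \<and> mat2 1 0 0 m *v v1 = g *s v2"
    using \<open>\<alpha> \<noteq> 0\<close> \<open>\<beta> \<noteq> 0\<close> \<open>\<rho>2 \<noteq> 0\<close> by (intro exI[of _ "\<beta> / (\<alpha> * \<rho>2)"]) simp
next
  assume "\<exists>g. g \<noteq> 0 \<and> mat2 1 0 0 m *v v1 = g *s v2"
  then obtain g where g: "v1$1 = g * v2$1" "m * v1$2 = g * v2$2"
    by (auto simp: mat2_mult_vector vec2_eq_iff)
  have "\<rho>1 \<noteq> 0"
    using assms(1) by auto
  define x :: "complex^2" where "x = vector [v1$1, v1$2 / \<rho>1]"
  have "x \<noteq> 0"
    using assms(2) \<open>\<rho>1 \<noteq> 0\<close> by (auto simp: x_def vec2_eq_iff)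
  moreover have "vector [x$1, \<rho>1 * x$2] = 1 *s v1"
    using \<open>\<rho>1 \<noteq> 0\<close> by (simp add: x_def vec2_eq_iff)
  moreover have "vector [\<rho>2 * x$1, x$2] = (\<rho>2 * g) *s v2"
  proof -
    have "v1$2 / \<rho>1 = \<rho>2 * (m * v1$2)"
      using assms(1) \<open>\<rho>1 \<noteq> 0\<close> by (simp add: field_simps)
    then show ?thesis
      using g by (simp add: x_def vec2_eq_iff ac_simps)
  qed
  ultimately show "\<exists>x :: complex^2. x \<noteq> 0 \<and> (\<exists>\<alpha>. vector [x$1, \<rho>1 * x$2] = \<alpha> *s v1) \<and> (\<exists>\<beta>. vector [\<rho>2 * x$1, x$2] = \<beta> *s v2)"
    by blast
qed

theorem theorem6:
  fixes bp bm dp dm c k :: real and l1 l2 :: complex and v1 v2 :: "complex^2"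
  assumes "bp > 0" and "bm > 0" and "bp + dp > 0" and "bm + dm > 0" and "c > 0"
    and "-pi \<le> k" and "k < pi"
    and "k \<noteq> 0 \<or> (dp \<noteq> 0 \<and> dm \<noteq> 0)"
    and "cmod l1 < 1" and "v1 \<noteq> 0" and "Pmat bp dp k *v v1 = l1 *s v1"
    and "cmod l2 > 1" and "v2 \<noteq> 0" and "Pmat bm dm k *v v2 = l2 *s v2"
  shows "cdim_two (kerHI bp dp bm dm c k) \<longleftrightarrow>
    (\<exists>g::complex. g \<noteq> 0 \<and>
       mat2 1 0 0 (complex_of_real ((bp + dp) * (bm + dm) / c\<^sup>2)) *v v1 = g *s v2)"
proof -
  \<comment> \<open>The bounds on \<open>k\<close> and the condition \<open>k \<noteq> 0 \<or> \<dots>\<close> only serve in the paper to produce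
    eigenvalues off the unit circle; here the eigenpairs are hypotheses.\<close>
  interpret interface_spectral bp bm dp dm c k l1 l2 v1 v2
    using assms by unfold_locales auto
  have cancel: "p * q / c\<^sup>2 * (c / p) * (c / q) = 1" if "p \<noteq> 0" "q \<noteq> 0" for p q
    using that assms(5) by (simp add: power2_eq_square)
  have "(bp + dp) * (bm + dm) / c\<^sup>2 * (c / (bp + dp)) * (c / (bm + dm)) = 1"
    by (rule cancel) (use assms(3,4) in auto)
  then have "complex_of_real ((bp + dp) * (bm + dm) / c\<^sup>2) * of_real (c / (bp + dp)) * of_real (c / (bm + dm)) = 1"
    by (simp only: of_real_mult[symmetric] of_real_1)
  then show ?thesis
    unfolding cdim_two_kerHI_iff admissible_def using eigenline_matching_iff assms(10) by blast
qed

end
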